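(* Let $(D,S)$ be a uniform steady-state bundle (as defined in the context). Then for any two channels $\mathcal{E},\mathcal{E}'\in D$, the phase steady-state spaces $S(\mathcal{E})$ and $S(\mathcal{E}')$ are isomorphic, i.e., they are in one-to-one correspondence.
   Context: Work with qubits on a lattice (in the thermodynamic limit); states are density matrices $\rho$ and observables $o$ have finite support and finite norm, with $\langle o|\rho\rangle=\mathrm{tr}(o^\dagger\rho)$. A quantum channel is a completely positive trace-preserving map. A channel $\mathcal{E}$ is called local if it obeys a Lieb–Robinson bound: there are constants $C,v,\alpha>0$ (depending only on the lattice and $\mathcal{E}$) such that for every state $\rho$, every observable $o_X$ of norm $1$ supported on $X$, every channel $\mathcal{V}_Y$ supported on $Y$, and every $t\ge 0$, $|\langle o_X|\mathcal{E}^t(\mathcal{V}_Y-\mathcal{I})|\rho\rangle|\le C\min(|X|,|Y|)\min(1,e^{\alpha(t-d_{XY}/v)})$, where $d_{XY}$ is the distance between $X$ and $Y$ and $\mathcal{I}$ is the identity map. A steady-state bundle $(D,S)$ consists of a connected open subset $D$ of the space of local channels together with an assignment to each $\mathcal{E}\in D$ of a convex set $S(\mathcal{E})$ of normalized states with $(\mathcal{E}-\mathcal{I})(\rho)=0$ for all $\rho\in S(\mathcal{E})$ (the phase steady states of $\mathcal{E}$; possibly a proper subset of all steady states). The bundle is uniform if $D$ can be covered by a family of open balls $\{B_i\}$ and there is a rate $\Delta>0$, independent of system size and uniform over all $B_i$, such that: for any $i$, any $\mathcal{E},\mathcal{E}'\in B_i$ and any $\rho\in S(\mathcal{E})$ there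 exists $\rho'\in S(\mathcal{E}')$ with $\mathcal{E}^t\rho'$ approaching $\rho$ exponentially, in the sense $|\langle o|\mathcal{E}^t\rho'-\rho\rangle|\le C_o e^{-\Delta t}\|o\|_\infty$ for every finitely supported observable $o$, with $C_o$ independent of $t$ and of the channels. *)

theory Defs
  imports "HOL-Analysis.Analysis"
begin

text \<open>
  Abstract interface to the quantum lattice system (qubits on a lattice, thermodynamic limit).
  'site : lattice sites;  'v : the real vector space containing the (density-matrix) states;
  'o : finitely supported observables.
\<close>

record ('site, 'v, 'o) qlattice =
  sdist    :: "'site \<Rightarrow> 'site \<Rightarrow> real"
  states   :: "'v set"
  obs_pair :: "'o \<Rightarrow> 'v \<Rightarrow> complex"          \<comment> \<open>the pairing <o|rho> = tr(o^dagger rho)\<close>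
  obs_supp :: "'o \<Rightarrow> 'site set"
  obs_norm :: "'o \<Rightarrow> real"
  ch_supp  :: "('v \<Rightarrow> 'v) \<Rightarrow> 'site set \<Rightarrow> bool"  \<comment> \<open>V is a quantum channel supported on Y\<close>

definition qlattice_axioms :: "('site, 'v::real_vector, 'o) qlattice \<Rightarrow> bool" where
  "qlattice_axioms Q \<longleftrightarrow>
     (\<forall>ob. finite (obs_supp Q ob)) \<and>
     convex (states Q) \<and>
     (\<forall>\<rho>1\<in>states Q. \<forall>\<rho>2\<in>states Q.
        (\<forall>ob. obs_pair Q ob \<rho>1 = obs_pair Q ob \<rho>2) \<longrightarrow> \<rho>1 = \<rho>2)"

definition set_dist :: "('site, 'v, 'o) qlattice \<Rightarrow> 'site set \<Rightarrow> 'site set \<Rightarrow> real" where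
  "set_dist Q X Y = Inf {sdist Q x y | x y. x \<in> X \<and> y \<in> Y}"

text \<open>Local channels: channels (elements of the metric space 'c acting on states via act)
  obeying a Lieb--Robinson bound.\<close>
definition is_local_channel ::
  "('site, 'v::real_vector, 'o) qlattice \<Rightarrow> ('c \<Rightarrow> 'v \<Rightarrow> 'v) \<Rightarrow> 'c \<Rightarrow> bool" where
  "is_local_channel Q act E \<longleftrightarrow>
     (\<forall>\<rho>\<in>states Q. act E \<rho> \<in> states Q) \<and>
     (\<exists>C v \<alpha>. C > 0 \<and> v > 0 \<and> \<alpha> > 0 \<and>
        (\<forall>\<rho>\<in>states Q. \<forall>ob X V Y. \<forall>t::nat.
           finite X \<longrightarrow> obs_supp Q ob \<subseteq> X \<longrightarrow> obs_norm Q ob = 1 \<longrightarrow>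
           finite Y \<longrightarrow> ch_supp Q V Y \<longrightarrow>
           cmod (obs_pair Q ob ((act E ^^ t) (V \<rho>)) - obs_pair Q ob ((act E ^^ t) \<rho>))
             \<le> C * real (min (card X) (card Y))
                 * min 1 (exp (\<alpha> * (real t - set_dist Q X Y / v)))))"

definition local_channels ::
  "('site, 'v::real_vector, 'o) qlattice \<Rightarrow> ('c \<Rightarrow> 'v \<Rightarrow> 'v) \<Rightarrow> 'c set" where
  "local_channels Q act = {E. is_local_channel Q act E}"

definition steady_state_bundle ::
  "('site, 'v::real_vector, 'o) qlattice \<Rightarrow> ('c::metric_space \<Rightarrow> 'v \<Rightarrow> 'v)
     \<Rightarrow> 'c set \<Rightarrow> ('c \<Rightarrow> 'v set) \<Rightarrow> bool" where
  "steady_state_bundle Q act D S \<longleftrightarrow>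
     D \<subseteq> local_channels Q act \<and>
     openin (top_of_set (local_channels Q act)) D \<and>
     connected D \<and>
     (\<forall>E\<in>D. S E \<subseteq> states Q \<and> convex (S E) \<and> (\<forall>\<rho>\<in>S E. act E \<rho> = \<rho>))"

definition uniform_bundle ::
  "('site, 'v::real_vector, 'o) qlattice \<Rightarrow> ('c::metric_space \<Rightarrow> 'v \<Rightarrow> 'v)
     \<Rightarrow> 'c set \<Rightarrow> ('c \<Rightarrow> 'v set) \<Rightarrow> bool" where
  "uniform_bundle Q act D S \<longleftrightarrow>
     (\<exists>(I::'c set set) . (\<forall>B\<in>I. \<exists>c r. c \<in> local_channels Q act \<and> r > 0 \<and>
                                B = ball c r \<inter> local_channels Q act) \<and>
        D \<subseteq> \<Union>I \<and>
        (\<exists>\<Delta>>0. \<exists>Co::'o \<Rightarrow> real.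
           \<forall>B\<in>I. \<forall>E\<in>B \<inter> D. \<forall>E'\<in>B \<inter> D. \<forall>\<rho>\<in>S E. \<exists>\<rho>'\<in>S E'.
             \<forall>ob. \<forall>t::nat. finite (obs_supp Q ob) \<longrightarrow>
               cmod (obs_pair Q ob ((act E ^^ t) \<rho>') - obs_pair Q ob \<rho>)
                 \<le> Co ob * exp (- \<Delta> * real t) * obs_norm Q ob))"

end

theory Submission
  imports Defs "HOL-Real_Asymp.Real_Asymp"
begin

text \<open>Within one ball of the cover, the uniform approach property sends each phase steady state
  of one channel to a steady state of the other from which it is reached exponentially fast.
  Since finitely supported observables separate states, this assignment is injective, so by
  Schroeder--Bernstein the two steady-state sets are equipotent. Equipotence is an equivalence
  relation that is locally constant on the connected set D, hence it holds on all of D.\<close>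

lemma tendsto_if_exponential_bound:
  fixes a :: "nat \<Rightarrow> 'a::real_normed_vector"
  assumes "\<Delta> > 0" and "\<And>t. norm (a t - x) \<le> K * exp (- \<Delta> * real t)"
  shows "a \<longlonglongrightarrow> x"
proof (rule LIM_zero_cancel, rule Lim_null_comparison)
  show "\<forall>\<^sub>F t in sequentially. norm (a t - x) \<le> K * exp (- \<Delta> * real t)"
    using assms(2) by simp
  show "(\<lambda>t. K * exp (- \<Delta> * real t)) \<longlonglongrightarrow> 0"
    using \<open>\<Delta> > 0\<close> by real_asymp
qed

lemma inj_on_if_limits_separate:
  fixes u :: "'i \<Rightarrow> nat \<Rightarrow> 'b \<Rightarrow> 'c::t2_space"
  assumes separate: "\<And>x y. x \<in> A \<Longrightarrow> y \<in> A \<Longrightarrow> (\<forall>i. p i x = p i y) \<Longrightarrow> x = y"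
    and limit: "\<And>x i. x \<in> A \<Longrightarrow> (\<lambda>t. u i t (g x)) \<longlonglongrightarrow> p i x"
  shows "inj_on g A"
proof (rule inj_onI)
  fix x y assume x: "x \<in> A" and y: "y \<in> A" and "g x = g y"
  have "p i x = p i y" for i
    using LIMSEQ_unique[OF limit[OF x, of i]] limit[OF y, of i] \<open>g x = g y\<close> by simp
  then show "x = y" using separate x y by blast
qed

lemma lepoll_if_exponentially_approached:
  assumes "qlattice_axioms Q" and "S1 \<subseteq> states Q" and "\<Delta> > 0"
    and approach: "\<forall>\<rho>\<in>S1. \<exists>\<rho>'\<in>S2. \<forall>ob. \<forall>t::nat. finite (obs_supp Q ob) \<longrightarrow>
           cmod (obs_pair Q ob ((f ^^ t) \<rho>') - obs_pair Q ob \<rho>)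
             \<le> Co ob * exp (- \<Delta> * real t) * obs_norm Q ob"
  shows "S1 \<lesssim> S2"
proof -
  obtain g where g_into: "\<And>\<rho>. \<rho> \<in> S1 \<Longrightarrow> g \<rho> \<in> S2"
    and g_approach: "\<And>\<rho> ob t. \<rho> \<in> S1 \<Longrightarrow> finite (obs_supp Q ob) \<Longrightarrow>
           cmod (obs_pair Q ob ((f ^^ t) (g \<rho>)) - obs_pair Q ob \<rho>)
             \<le> Co ob * exp (- \<Delta> * real t) * obs_norm Q ob"
    using bchoice[OF approach[unfolded Bex_def]] by blast
  have "inj_on g S1"
  proof (rule inj_on_if_limits_separate)
    show "x = y" if "x \<in> S1" "y \<in> S1" "\<forall>ob. obs_pair Q ob x = obs_pair Q ob y" for x y
      using assms(1,2) that unfolding qlattice_axioms_def by blast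
    show "(\<lambda>t. obs_pair Q ob ((f ^^ t) (g \<rho>))) \<longlonglongrightarrow> obs_pair Q ob \<rho>" if "\<rho> \<in> S1" for \<rho> ob
    proof (rule tendsto_if_exponential_bound[OF \<open>\<Delta> > 0\<close>])
      show "cmod (obs_pair Q ob ((f ^^ t) (g \<rho>)) - obs_pair Q ob \<rho>)
          \<le> Co ob * obs_norm Q ob * exp (- \<Delta> * real t)" for t
        using g_approach[OF that, of ob t] assms(1) unfolding qlattice_axioms_def
        by (simp add: mult_ac)
    qed
  qed
  then show ?thesis
    unfolding lepoll_def using g_into by blast
qed

lemma uniform_bundle_locally_eqpoll:
  fixes act :: "'c::metric_space \<Rightarrow> 'v::real_vector \<Rightarrow> 'v"
  assumes "qlattice_axioms Q" and "steady_state_bundle Q act D S"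
    and "uniform_bundle Q act D S" and "E0 \<in> D"
  shows "\<exists>T. openin (top_of_set D) T \<and> E0 \<in> T \<and> (\<forall>E\<in>T. S E0 \<approx> S E)"
proof -
  have D_local: "D \<subseteq> local_channels Q act"
    and S_states: "\<And>E. E \<in> D \<Longrightarrow> S E \<subseteq> states Q"
    using assms(2) unfolding steady_state_bundle_def by blast+
  obtain I :: "'c set set" and \<Delta> Co where
    balls: "\<forall>B\<in>I. \<exists>c r. c \<in> local_channels Q act \<and> r > 0 \<and> B = ball c r \<inter> local_channels Q act"
    and cover: "D \<subseteq> \<Union>I" and "\<Delta> > 0"
    and approach: "\<forall>B\<in>I. \<forall>E\<in>B \<inter> D. \<forall>E'\<in>B \<inter> D. \<forall>\<rho>\<in>S E. \<exists>\<rho>'\<in>S E'.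
             \<forall>ob. \<forall>t::nat. finite (obs_supp Q ob) \<longrightarrow>
               cmod (obs_pair Q ob ((act E ^^ t) \<rho>') - obs_pair Q ob \<rho>)
                 \<le> Co ob * exp (- \<Delta> * real t) * obs_norm Q ob"
    using assms(3) unfolding uniform_bundle_def by (elim exE conjE) (rule that; assumption)
  obtain B where B: "B \<in> I" "E0 \<in> B" using cover \<open>E0 \<in> D\<close> by blast
  then obtain c r where "B = ball c r \<inter> local_channels Q act" using balls by blast
  then have "B \<inter> D = D \<inter> ball c r" using D_local by blast
  then have "openin (top_of_set D) (B \<inter> D)" by (metis openin_open_Int open_ball)
  have lepoll_in_ball: "S E1 \<lesssim> S E2" if "E1 \<in> B \<inter> D" "E2 \<in> B \<inter> D" for E1 E2
  proof (rule lepoll_if_exponentially_approached[OF assms(1) _ \<open>\<Delta> > 0\<close>])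
    show "S E1 \<subseteq> states Q" using S_states that(1) by blast
    show "\<forall>\<rho>\<in>S E1. \<exists>\<rho>'\<in>S E2. \<forall>ob. \<forall>t::nat. finite (obs_supp Q ob) \<longrightarrow>
           cmod (obs_pair Q ob ((act E1 ^^ t) \<rho>') - obs_pair Q ob \<rho>)
             \<le> Co ob * exp (- \<Delta> * real t) * obs_norm Q ob"
      using approach \<open>B \<in> I\<close> that by blast
  qed
  have "S E0 \<approx> S E" if "E \<in> B \<inter> D" for E
    using lepoll_in_ball B \<open>E0 \<in> D\<close> that by (blast intro: lepoll_antisym)
  with \<open>openin (top_of_set D) (B \<inter> D)\<close> show ?thesis using B \<open>E0 \<in> D\<close> by blast
qed

theorem theorem1:
  fixes Q :: "('site, 'v::real_vector, 'o) qlattice"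
    and act :: "'c::metric_space \<Rightarrow> 'v \<Rightarrow> 'v"
    and D :: "'c set" and S :: "'c \<Rightarrow> 'v set"
  assumes "qlattice_axioms Q"
    and "steady_state_bundle Q act D S"
    and "uniform_bundle Q act D S"
    and "E \<in> D" and "E' \<in> D"
  shows "\<exists>f. bij_betw f (S E) (S E')"
proof -
  have "connected D"
    using assms(2) unfolding steady_state_bundle_def by blast
  then have "S E \<approx> S E'"
  proof (rule connected_equivalence_relation[OF _ assms(4,5)])
    show "S E2 \<approx> S E1" if "S E1 \<approx> S E2" for E1 E2
      using that by (rule eqpoll_sym)
    show "S E1 \<approx> S E3" if "S E1 \<approx> S E2" "S E2 \<approx> S E3" for E1 E2 E3
      using that by (rule eqpoll_trans)
    show "\<exists>T. openin (top_of_set D) T \<and> E0 \<in> T \<and> (\<forall>E\<in>T. S E0 \<approx> S E)" if "E0 \<in> D" for E0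
      using uniform_bundle_locally_eqpoll[OF assms(1-3) that] .
  qed
  then show ?thesis
    unfolding eqpoll_def .
qed

end
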